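(* Suppose $w$ satisfies Assumption 1, $\gamma\in\mathbb R$. Consider the ODE $$Y'(t)=-\theta^2\Big[1+\frac{h'(-\gamma\sqrt{Y(t)})}{h(-\gamma\sqrt{Y(t)})\sqrt{Y(t)}}\Big]^{-2},\ t\in[0,T),\qquad Y(T)=0,\qquad(\mathrm A)$$ where a positive solution is a function satisfying (A) with $Y>0$ on $[0,T)$. (i) If (A) admits a positive solution, then $\boldsymbol\mu\ne\boldsymbol0$ and $h'(0)=0$. (ii) If $\boldsymbol\mu\neq\boldsymbol0$, $h'(0)=0$ and $\mathcal G(y_1)>\theta^2T$, then $Y(t)=\mathcal G^{-1}(\theta^2(T-t))$, $t\in[0,T]$, is the unique positive solution of (A), and $1+\frac{h'(-\gamma\sqrt{Y(t)})}{h(-\gamma\sqrt{Y(t)})\sqrt{Y(t)}}>0$ for all $t\in[0,T)$.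
   Context: Constants: $\boldsymbol\mu\in\mathbb R^n$, $\boldsymbol\sigma\in\mathbb R^{n\times d}$ with $\boldsymbol\sigma\boldsymbol\sigma^\top$ positive definite, $\theta=\sqrt{\boldsymbol\mu^\top(\boldsymbol\sigma\boldsymbol\sigma^\top)^{-1}\boldsymbol\mu}$, $T>0$. Assumption 1 on $w:[0,1]\to[0,1]$: strictly increasing, $C^1$, $w(0)=0,w(1)=1$, $w'(p)\le c[p^\alpha+(1-p)^\alpha]$ on $(0,1)$ for some $c>0,\alpha\in(-1,0)$. $\bar w(p)=1-w(1-p)$. $h(x)=\int_0^1e^{-x\Phi^{-1}(p)}d\bar w(p)$, $x\in\mathbb R$ ($\Phi$ standard normal distribution function); $h$ is smooth, positive, with $h(0)=1$. When $h'(0)=0$: $\mathcal G(y)=\int_0^y\big[1+\frac{h'(-\gamma\sqrt z)}{h(-\gamma\sqrt z)\sqrt z}\big]^2dz$, $y\in[0,\infty]$; $y_1=\inf\{y>0:1+\frac{h'(-\gamma\sqrt y)}{h(-\gamma\sqrt y)\sqrt y}\le0\}$ ($\inf\emptyset=\infty$); when $y_1>0$, $\mathcal G$ is strictly increasing on $[0,y_1]$ with inverse $\mathcal G^{-1}:[0,\mathcal G(y_1)]\to[0,y_1]$. *)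

theory Defs
  imports "HOL-Probability.Probability"
begin

definition assumption1 :: "(real \<Rightarrow> real) \<Rightarrow> bool" where
  "assumption1 w \<longleftrightarrow>
     strict_mono_on {0..1} w \<and> w ` {0..1} \<subseteq> {0..1} \<and>
     continuous_on {0..1} w \<and>
     (\<forall>p\<in>{0<..<1}. w differentiable (at p)) \<and> continuous_on {0<..<1} (deriv w) \<and>
     w 0 = 0 \<and> w 1 = 1 \<and>
     (\<exists>c>0. \<exists>\<alpha>. -1 < \<alpha> \<and> \<alpha> < 0 \<and>
        (\<forall>p\<in>{0<..<1}. deriv w p \<le> c * (p powr \<alpha> + (1 - p) powr \<alpha>)))"

text \<open>Dual weighting w-bar(p) = 1 - w(1-p), extended constantly outside [0,1]
  (value 0 left of 0, value 1 right of 1) so that it is a distribution function on the reals.\<close>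
definition wbar :: "(real \<Rightarrow> real) \<Rightarrow> real \<Rightarrow> real" where
  "wbar w p = 1 - w (1 - max 0 (min 1 p))"

definition Phi :: "real \<Rightarrow> real" where
  "Phi x = set_lebesgue_integral lborel {..x} std_normal_density"

definition Phi_inv :: "real \<Rightarrow> real" where
  "Phi_inv p = (THE x. Phi x = p)"

definition hfun :: "(real \<Rightarrow> real) \<Rightarrow> real \<Rightarrow> real" where
  "hfun w x = set_lebesgue_integral (interval_measure (wbar w)) {0<..<1}
                 (\<lambda>p. exp (- x * Phi_inv p))"

definition bracket :: "(real \<Rightarrow> real) \<Rightarrow> real \<Rightarrow> real \<Rightarrow> real" where
  "bracket w \<gamma> y = 1 + deriv (hfun w) (- \<gamma> * sqrt y) / (hfun w (- \<gamma> * sqrt y) * sqrt y)"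

definition Gfun :: "(real \<Rightarrow> real) \<Rightarrow> real \<Rightarrow> ereal \<Rightarrow> ennreal" where
  "Gfun w \<gamma> y = (\<integral>\<^sup>+ z. indicator {z. 0 \<le> z \<and> ereal z \<le> y} z * ennreal ((bracket w \<gamma> z)\<^sup>2) \<partial>lborel)"

text \<open>y1 = inf{y>0 : bracket(y) \<le> 0}, with inf of the empty set = infinity.\<close>
definition y1 :: "(real \<Rightarrow> real) \<Rightarrow> real \<Rightarrow> ereal" where
  "y1 w \<gamma> = Inf (ereal ` {y. 0 < y \<and> bracket w \<gamma> y \<le> 0})"

definition Ginv :: "(real \<Rightarrow> real) \<Rightarrow> real \<Rightarrow> real \<Rightarrow> real" where
  "Ginv w \<gamma> x = (THE y. 0 \<le> y \<and> ereal y \<le> y1 w \<gamma> \<and> Gfun w \<gamma> (ereal y) = ennreal x)"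

definition pos_def_mat :: "real^'n^'n \<Rightarrow> bool" where
  "pos_def_mat A \<longleftrightarrow> (\<forall>x. x \<noteq> 0 \<longrightarrow> x \<bullet> (A *v x) > 0)"

definition theta :: "real^'n \<Rightarrow> real^'d^'n \<Rightarrow> real" where
  "theta \<mu> \<sigma> = sqrt (\<mu> \<bullet> (matrix_inv (\<sigma> ** transpose \<sigma>) *v \<mu>))"

definition pos_sol :: "(real \<Rightarrow> real) \<Rightarrow> real \<Rightarrow> real \<Rightarrow> real \<Rightarrow> (real \<Rightarrow> real) \<Rightarrow> bool" where
  "pos_sol w \<gamma> \<theta> T Y \<longleftrightarrow>
     continuous_on {0..T} Y \<and> Y T = 0 \<and>
     (\<forall>t\<in>{0..<T}. Y t > 0 \<and> bracket w \<gamma> (Y t) \<noteq> 0 \<and>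
        (Y has_real_derivative (- \<theta>\<^sup>2 * (bracket w \<gamma> (Y t)) powi (-2))) (at t within {0..T}))"

end

theory Submission
  imports Defs
begin

text \<open>Assumption 1 makes \<open>w'\<close> integrable against the Gaussian tails of \<open>Phi_inv\<close>, so all
  exponential moments of the normal quantile under \<open>wbar w\<close> are finite and \<open>h\<close> is an entire
  power series; in particular \<open>h > 0\<close> and \<open>h\<close>, \<open>h'\<close>, \<open>h''\<close> are continuous.
  Along a positive solution \<open>Y\<close> of (A) the function \<open>G(Y(t)) + \<theta>\<^sup>2 t\<close> has derivative
  \<open>bracket(Y)\<^sup>2 Y' + \<theta>\<^sup>2 = 0\<close>, so \<open>G(Y(t)) = \<theta>\<^sup>2 (T - t)\<close>; as \<open>G\<close> is strictly increasing on
  \<open>[0, y1]\<close>, this gives uniqueness, and inverting \<open>G\<close> there gives the solution.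
  Conversely, \<open>\<mu> = 0\<close> means \<open>\<theta> = 0\<close> and makes a solution constant, contradicting
  \<open>Y(0) > 0 = Y(T)\<close>; and if \<open>h'(0) \<noteq> 0\<close> the bracket grows like \<open>1 / sqrt y\<close> at \<open>0\<close>, so near \<open>T\<close>
  a solution satisfies \<open>Y' \<ge> -c Y\<close> and cannot reach \<open>0\<close> at \<open>T\<close>.\<close>

section \<open>The standard normal distribution\<close>

abbreviation normal_measure :: "real measure" where
  "normal_measure \<equiv> density lborel std_normal_density"

lemma real_distribution_normal_measure: "real_distribution normal_measure"
  unfolding real_distribution_def real_distribution_axioms_def
  using prob_space_normal_density by auto

lemma Phi_eq_cdf: "Phi = cdf normal_measure"
proof
  fix x
  have "emeasure normal_measure {..x} = (\<integral>\<^sup>+t. ennreal (std_normal_density t * indicator {..x} t) \<partial>lborel)"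
    by (subst emeasure_density) (auto intro!: nn_integral_cong split: split_indicator)
  also have "\<dots> = ennreal (\<integral>t. std_normal_density t * indicator {..x} t \<partial>lborel)"
    using integrable_mult_indicator[of "{..x}" lborel std_normal_density]
    by (intro nn_integral_eq_integral) (auto simp: mult.commute)
  finally show "Phi x = cdf normal_measure x"
    unfolding Phi_def cdf_def set_lebesgue_integral_def measure_def by (simp add: mult.commute)
qed

lemma Phi_strict_mono: "strict_mono Phi"
proof (rule strict_monoI)
  fix x y :: real
  assume "x < y"
  interpret real_distribution normal_measure by (rule real_distribution_normal_measure)
  have "emeasure normal_measure {x<..y} \<noteq> 0"
  proof
    assume "emeasure normal_measure {x<..y} = 0"
    then have "AE t in lborel. t \<notin> {x<..y}"
      by (simp add: emeasure_density nn_integral_0_iff_AE indicator_eq_0_iff std_normal_density_def)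
    with \<open>x < y\<close> show False
      using AE_iff_measurable[of "{x<..y}" lborel "\<lambda>t. t \<notin> {x<..y}"] by (simp add: set_eq_iff)
  qed
  then have "measure normal_measure {x<..y} > 0"
    by (simp add: emeasure_eq_measure zero_less_measure_iff)
  then show "Phi x < Phi y"
    using cdf_diff_eq[OF \<open>x < y\<close>] by (simp add: Phi_eq_cdf)
qed

lemma isCont_Phi: "isCont Phi x"
proof -
  interpret real_distribution normal_measure by (rule real_distribution_normal_measure)
  have "emeasure normal_measure {x} = 0"
    by (simp add: emeasure_density nn_integral_0_iff_AE AE_lborel_singleton)
  then show ?thesis
    using isCont_cdf by (simp add: Phi_eq_cdf measure_def)
qed

lemma Phi_at_bot: "(Phi \<longlongrightarrow> 0) at_bot"
  and Phi_at_top: "(Phi \<longlongrightarrow> 1) at_top"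
proof -
  interpret real_distribution normal_measure by (rule real_distribution_normal_measure)
  show "(Phi \<longlongrightarrow> 0) at_bot" "(Phi \<longlongrightarrow> 1) at_top"
    using cdf_lim_at_bot cdf_lim_at_top_prob by (simp_all add: Phi_eq_cdf)
qed

lemma Phi_surj:
  assumes "0 < p" "p < 1"
  obtains x where "Phi x = p"
proof -
  obtain a where a: "Phi a < p"
    using order_tendstoD(2)[OF Phi_at_bot assms(1)] by (auto simp: eventually_at_bot_linorder)
  obtain b where b: "p < Phi b"
    using order_tendstoD(1)[OF Phi_at_top assms(2)] by (auto simp: eventually_at_top_linorder)
  have "a \<le> b"
    using a b strict_mono_less_eq[OF Phi_strict_mono, of b a] by linarith
  with a b isCont_Phi IVT[of Phi a p b] that show ?thesis by auto
qed

lemma Phi_Phi_inv: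
  assumes "0 < p" "p < 1"
  shows "Phi (Phi_inv p) = p"
proof -
  obtain x where x: "Phi x = p"
    using Phi_surj assms .
  have "Phi_inv p = x"
    unfolding Phi_inv_def using x strict_mono_eq[OF Phi_strict_mono] by (intro the_equality) auto
  with x show ?thesis by simp
qed

lemma Phi_inv_le_iff: "0 < p \<Longrightarrow> p < 1 \<Longrightarrow> Phi_inv p \<le> t \<longleftrightarrow> p \<le> Phi t"
  using strict_mono_less_eq[OF Phi_strict_mono, of "Phi_inv p" t] Phi_Phi_inv[of p] by simp

lemma exp_mult_std_normal_density:
  "exp (c * t) * std_normal_density t = exp (c\<^sup>2 / 2) * normal_density c 1 t"
proof -
  have "c * t + - t\<^sup>2 / 2 = c\<^sup>2 / 2 + - (t - c)\<^sup>2 / 2"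
    by (simp add: power2_eq_square field_simps)
  then show ?thesis
    unfolding normal_density_def by (simp flip: exp_add)
qed

lemma integrable_exp_std_normal: "integrable lborel (\<lambda>t. exp (c * t) * std_normal_density t)"
  unfolding exp_mult_std_normal_density by simp

lemma integral_exp_std_normal: "(\<integral>t. exp (c * t) * std_normal_density t \<partial>lborel) = exp (c\<^sup>2 / 2)"
  unfolding exp_mult_std_normal_density by simp

lemma Phi_le_exp:
  assumes "b \<ge> 0"
  shows "Phi x \<le> exp (b * x + b\<^sup>2 / 2)"
proof -
  have "Phi x = (\<integral>t. indicator {..x} t * std_normal_density t \<partial>lborel)"
    unfolding Phi_def set_lebesgue_integral_def by simp
  also have "\<dots> \<le> (\<integral>t. exp (b * x) * (exp ((- b) * t) * std_normal_density t) \<partial>lborel)"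
  proof (rule integral_mono)
    fix t
    have "indicator {..x} t \<le> exp (b * x) * exp ((- b) * t)"
      using assms by (auto simp: indicator_def mult_left_mono simp flip: exp_add)
    then show "indicator {..x} t * std_normal_density t
        \<le> exp (b * x) * (exp ((- b) * t) * std_normal_density t)"
      by (simp add: mult.assoc[symmetric] mult_right_mono)
  qed (use integrable_mult_indicator[of "{..x}" lborel std_normal_density]
       integrable_exp_std_normal[of "- b"] in auto)
  also have "\<dots> = exp (b * x + b\<^sup>2 / 2)"
    using integral_exp_std_normal[of "- b"] by (simp add: exp_add)
  finally show ?thesis .
qed

lemma one_minus_Phi_le_exp:
  assumes "b \<ge> 0"
  shows "1 - Phi x \<le> exp (- b * x + b\<^sup>2 / 2)"
proof -
  have int_Iic: "integrable lborel (\<lambda>t. indicator {..x} t * std_normal_density t)"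
    using integrable_mult_indicator[of "{..x}" lborel std_normal_density] by simp
  have "1 - Phi x = (\<integral>t. std_normal_density t - indicator {..x} t * std_normal_density t \<partial>lborel)"
    unfolding Phi_def set_lebesgue_integral_def using int_Iic by simp
  also have "\<dots> \<le> (\<integral>t. exp (- b * x) * (exp (b * t) * std_normal_density t) \<partial>lborel)"
  proof (rule integral_mono)
    fix t
    have "1 - indicator {..x} t \<le> exp (- b * x) * exp (b * t)"
      using assms by (auto simp: indicator_def mult_left_mono simp flip: exp_add)
    then have "(1 - indicator {..x} t) * std_normal_density t
        \<le> (exp (- b * x) * exp (b * t)) * std_normal_density t"
      by (rule mult_right_mono) simp
    then show "std_normal_density t - indicator {..x} t * std_normal_density t
        \<le> exp (- b * x) * (exp (b * t) * std_normal_density t)"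
      by (simp add: algebra_simps)
  qed (use int_Iic integrable_exp_std_normal in auto)
  also have "\<dots> = exp (- b * x) * exp (b\<^sup>2 / 2)"
    using integral_exp_std_normal[of b] by simp
  also have "\<dots> = exp (- b * x + b\<^sup>2 / 2)"
    by (simp only: exp_add)
  finally show ?thesis .
qed

text \<open>\<open>Phi_inv\<close> is a \<open>THE\<close>-term without meaning outside \<open>(0,1)\<close>; this total version of it is
  Borel measurable and agrees with \<open>Phi_inv\<close> wherever \<open>hfun\<close> uses it.\<close>

definition normal_quantile :: "real \<Rightarrow> real" where
  "normal_quantile p = (if 0 < p \<and> p < 1 then Phi_inv p else 0)"

lemma borel_measurable_normal_quantile [measurable]: "normal_quantile \<in> borel_measurable borel"
proof (subst borel_measurable_iff_le, intro allI)
  fix t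
  have "{p \<in> space borel. normal_quantile p \<le> t}
      = ({0<..<1} \<inter> {..Phi t}) \<union> (if 0 \<le> t then - {0<..<1} else {})"
    by (auto simp: normal_quantile_def Phi_inv_le_iff)
  then show "{p \<in> space borel. normal_quantile p \<le> t} \<in> sets borel" by simp
qed

lemma exp_abs_normal_quantile_le:
  assumes p: "0 < p" "p < 1" and "a \<ge> 0" "e > 0"
  shows "exp (a * \<bar>normal_quantile p\<bar>) \<le> exp (a\<^sup>2 / (2 * e)) * (p powr (- e) + (1 - p) powr (- e))"
proof -
  define q where "q = normal_quantile p"
  define b where "b = a / e"
  have "b \<ge> 0"
    using assms by (simp add: b_def)
  have scale: "e * (b * q + b\<^sup>2 / 2) = a * q + a\<^sup>2 / (2 * e)"
    "e * (- b * q + b\<^sup>2 / 2) = - a * q + a\<^sup>2 / (2 * e)"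
    using \<open>e > 0\<close> by (simp_all add: b_def power2_eq_square field_simps)
  have Phi_q: "Phi q = p"
    using p by (simp add: q_def normal_quantile_def Phi_Phi_inv)
  have "ln p \<le> b * q + b\<^sup>2 / 2"
    using Phi_le_exp[OF \<open>b \<ge> 0\<close>, of q] p ln_le_cancel_iff[of p "exp (b * q + b\<^sup>2 / 2)"]
    by (simp add: Phi_q)
  then have "e * ln p \<le> a * q + a\<^sup>2 / (2 * e)"
    using mult_left_mono[of _ _ e] \<open>e > 0\<close> scale(1) by fastforce
  then have lower: "exp (- a * q) \<le> exp (a\<^sup>2 / (2 * e)) * p powr (- e)"
    using p by (simp add: powr_def flip: exp_add)
  have "ln (1 - p) \<le> - b * q + b\<^sup>2 / 2"
    using one_minus_Phi_le_exp[OF \<open>b \<ge> 0\<close>, of q] p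
      ln_le_cancel_iff[of "1 - p" "exp (- b * q + b\<^sup>2 / 2)"]
    by (simp add: Phi_q)
  then have "e * ln (1 - p) \<le> - a * q + a\<^sup>2 / (2 * e)"
    using mult_left_mono[of _ _ e] \<open>e > 0\<close> scale(2) by fastforce
  then have upper: "exp (a * q) \<le> exp (a\<^sup>2 / (2 * e)) * (1 - p) powr (- e)"
    using p by (simp add: powr_def flip: exp_add)
  have "exp (a * \<bar>q\<bar>) \<le> exp (- a * q) + exp (a * q)"
    by (cases "q \<ge> 0") (auto simp: add_nonneg_pos add_pos_nonneg)
  with lower upper show ?thesis
    by (simp add: q_def distrib_left)
qed

lemma powr_sum_mult_powr_sum_le:
  fixes x y a e :: real
  assumes "0 < x" "0 < y" "a \<le> 0" "e \<ge> 0"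
  shows "(x powr a + y powr a) * (x powr (- e) + y powr (- e)) \<le> 4 * (x powr (a - e) + y powr (a - e))"
proof -
  have cross: "u powr a * v powr (- e) \<le> u powr (a - e) + v powr (a - e)" if "0 < u" "0 < v" for u v
  proof (cases "u \<le> v")
    case True
    then have "u powr a * v powr (- e) \<le> u powr a * u powr (- e)"
      using that assms by (intro mult_left_mono powr_mono2') auto
    then show ?thesis by (simp add: powr_add[symmetric] add_increasing2)
  next
    case False
    then have "u powr a * v powr (- e) \<le> v powr a * v powr (- e)"
      using that assms by (intro mult_right_mono powr_mono2') auto
    then show ?thesis by (simp add: powr_add[symmetric] add_increasing)
  qed
  have "(x powr a + y powr a) * (x powr (- e) + y powr (- e))
      = x powr (a - e) + y powr (a - e) + x powr a * y powr (- e) + y powr a * x powr (- e)"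
    by (simp add: algebra_simps powr_add[symmetric])
  also have "\<dots> \<le> 4 * (x powr (a - e) + y powr (a - e))"
    using cross[OF assms(1,2)] cross[OF assms(2,1)] powr_ge_zero[of x "a - e"] powr_ge_zero[of y "a - e"]
    by argo
  finally show ?thesis .
qed

lemma sum_exp_series_abs_le:
  fixes y :: real
  assumes "finite I"
  shows "(\<Sum>n\<in>I. \<bar>y\<bar> ^ n / fact n) \<le> exp \<bar>y\<bar>"
proof -
  have "(\<lambda>n. \<bar>y\<bar> ^ n / fact n) sums exp \<bar>y\<bar>"
    using exp_converges[of "\<bar>y\<bar>"] by (simp add: divide_inverse mult.commute)
  with assms show ?thesis
    using sum_le_suminf[of "\<lambda>n. \<bar>y\<bar> ^ n / fact n" I] by (simp add: sums_iff)
qed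

lemma integral_exp_sums:
  fixes f :: "'a \<Rightarrow> real"
  assumes [measurable]: "f \<in> borel_measurable M"
    and integrable_exp: "integrable M (\<lambda>p. exp (\<bar>x\<bar> * \<bar>f p\<bar>))"
  shows "(\<lambda>n. x ^ n / fact n * (\<integral>p. f p ^ n \<partial>M)) sums (\<integral>p. exp (x * f p) \<partial>M)"
proof -
  define u where "u = (\<lambda>n p. (x * f p) ^ n / fact n)"
  have norm_u: "\<bar>u n p\<bar> = \<bar>x * f p\<bar> ^ n / fact n" for n p
    by (simp add: u_def power_abs)
  have partial_sum_le: "(\<Sum>n\<in>I. norm (u n p)) \<le> exp (\<bar>x\<bar> * \<bar>f p\<bar>)" if "finite I" for I p
    using sum_exp_series_abs_le[OF that, of "x * f p"] by (simp add: norm_u abs_mult)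
  have [measurable]: "u n \<in> borel_measurable M" for n
    unfolding u_def by measurable
  have integrable_u: "integrable M (u n)" for n
    by (rule Bochner_Integration.integrable_bound[OF integrable_exp])
      (use partial_sum_le[of "{n}"] in \<open>auto simp: u_def\<close>)
  have "summable (\<lambda>n. norm (u n p))" for p
    using exp_converges[of "\<bar>x * f p\<bar>"] by (simp add: norm_u sums_iff divide_inverse mult.commute)
  moreover have "summable (\<lambda>n. \<integral>p. norm (u n p) \<partial>M)"
  proof (rule summableI_nonneg_bounded)
    fix N
    have "(\<Sum>n<N. \<integral>p. norm (u n p) \<partial>M) = (\<integral>p. (\<Sum>n<N. norm (u n p)) \<partial>M)"
      using integrable_u by (simp add: Bochner_Integration.integral_sum)
    also have "\<dots> \<le> (\<integral>p. exp (\<bar>x\<bar> * \<bar>f p\<bar>) \<partial>M)"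
      using integrable_u integrable_exp partial_sum_le by (intro integral_mono) auto
    finally show "(\<Sum>n<N. \<integral>p. norm (u n p) \<partial>M) \<le> (\<integral>p. exp (\<bar>x\<bar> * \<bar>f p\<bar>) \<partial>M)" .
  qed simp
  ultimately have "(\<lambda>n. integral\<^sup>L M (u n)) sums (\<integral>p. (\<Sum>n. u n p) \<partial>M)"
    using integrable_u by (intro sums_integral) auto
  moreover have "(\<Sum>n. u n p) = exp (x * f p)" for p
    using exp_converges[of "x * f p"] by (simp add: u_def sums_iff divide_inverse mult.commute)
  moreover have "integral\<^sup>L M (u n) = x ^ n / fact n * (\<integral>p. f p ^ n \<partial>M)" for n
    by (simp add: u_def power_mult_distrib)
  ultimately show ?thesis by simp
qed

lemma set_integrable_powr_endpoints:
  fixes \<beta> :: real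
  assumes "\<beta> > -1"
  shows "set_integrable lborel {0..1} (\<lambda>p. p powr \<beta> + (1 - p) powr \<beta>)"
proof -
  have "set_integrable lborel {0..1} (\<lambda>p. p powr ((\<beta> + 1) - 1) * (1 - p) powr (1 - 1))"
    "set_integrable lborel {0..1} (\<lambda>p. p powr (1 - 1) * (1 - p) powr ((\<beta> + 1) - 1))"
    using assms by (intro integrable_Beta; simp)+
  then have "integrable lborel (\<lambda>p. indicator {0..1} p * (p powr ((\<beta> + 1) - 1) * (1 - p) powr (1 - 1))
      + indicator {0..1} p * (p powr (1 - 1) * (1 - p) powr ((\<beta> + 1) - 1)))"
    unfolding set_integrable_def by simp
  then show ?thesis
    unfolding set_integrable_def
  proof (rule integrable_cong_AE_imp)
    show "AE p in lborel. indicator {0..1} p * (p powr ((\<beta> + 1) - 1) * (1 - p) powr (1 - 1))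
        + indicator {0..1} p * (p powr (1 - 1) * (1 - p) powr ((\<beta> + 1) - 1))
        = indicator {0..1} p *\<^sub>R (p powr \<beta> + (1 - p) powr \<beta>)"
      using AE_lborel_singleton[of 0] AE_lborel_singleton[of 1]
      by eventually_elim (auto simp: indicator_def algebra_simps)
  qed measurable
qed

lemma linear_differential_inequality_lower_bound:
  fixes Z :: "real \<Rightarrow> real"
  assumes "a \<le> b" "continuous_on {a..b} Z"
    and "\<And>t. a < t \<Longrightarrow> t < b \<Longrightarrow> \<exists>D. (Z has_real_derivative D) (at t) \<and> - L * Z t \<le> D"
  shows "Z a * exp (L * (a - b)) \<le> Z b"
proof -
  define g where "g t = Z t * exp (L * t)" for t
  have "g a \<le> g b"
  proof (rule DERIV_nonneg_imp_increasing_open[OF assms(1)])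
    show "continuous_on {a..b} g"
      unfolding g_def by (intro continuous_intros assms(2))
    fix t
    assume "a < t" "t < b"
    then obtain D where D: "(Z has_real_derivative D) (at t)" "- L * Z t \<le> D"
      using assms(3) by blast
    have "(g has_real_derivative exp (L * t) * (D + L * Z t)) (at t)"
      unfolding g_def using D(1) by (auto intro!: derivative_eq_intros simp: algebra_simps)
    moreover have "0 \<le> exp (L * t) * (D + L * Z t)"
      using D(2) by simp
    ultimately show "\<exists>D. (g has_real_derivative D) (at t) \<and> 0 \<le> D"
      by blast
  qed
  then have "Z a * exp (L * a) * exp (- (L * b)) \<le> Z b * exp (L * b) * exp (- (L * b))"
    unfolding g_def by (intro mult_right_mono) auto
  then show ?thesis
    by (simp add: algebra_simps flip: exp_add)
qed

lemma isCont_slope_extension: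
  fixes f :: "real \<Rightarrow> real"
  assumes "(f has_real_derivative D) (at 0)" "f 0 = 0" "isCont f x"
  shows "isCont (\<lambda>u. if u = 0 then D else f u / u) x"
proof (cases "x = 0")
  case True
  have "((\<lambda>u. (f (0 + u) - f 0) / u) \<longlongrightarrow> D) (at 0)"
    using assms(1) unfolding DERIV_def .
  then have "((\<lambda>u. if u = 0 then D else f u / u) \<longlongrightarrow> D) (at 0)"
    by (rule Lim_transform_eventually) (simp add: eventually_at_filter assms(2))
  with True show ?thesis
    by (simp add: isCont_def)
next
  case False
  have "\<forall>\<^sub>F u in nhds x. f u / u = (if u = 0 then D else f u / u)"
    using False by (intro eventually_mono[OF t1_space_nhds[OF False]]) auto
  moreover have "isCont (\<lambda>u. f u / u) x"
    using False assms(3) by (intro continuous_intros) auto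
  ultimately show ?thesis
    by (simp add: isCont_cong)
qed

section \<open>Positive solutions of (A)\<close>

lemma no_pos_sol_theta_0: "T > 0 \<Longrightarrow> \<not> pos_sol w \<gamma> 0 T Z"
proof
  assume "T > 0" "pos_sol w \<gamma> 0 T Z"
  then have "continuous_on {0..T} Z" "Z T = 0"
    and sol: "\<forall>s\<in>{0..<T}. Z s > 0 \<and> (Z has_real_derivative 0) (at s within {0..T})"
    unfolding pos_sol_def by auto
  moreover have "(Z has_real_derivative 0) (at s)" if "0 < s" "s < T" for s
    using bspec[OF sol, of s] that by (simp add: at_within_Icc_at)
  ultimately show False
    using \<open>T > 0\<close> bspec[OF sol, of 0] DERIV_isconst2[of 0 T Z T] by simp
qed

lemma y1_nonneg: "0 \<le> y1 w \<gamma>"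
  unfolding y1_def by (rule Inf_greatest) auto

lemma bracket_pos_below_y1:
  assumes "0 < y" "ereal y < y1 w \<gamma>"
  shows "bracket w \<gamma> y > 0"
proof (rule ccontr)
  assume "\<not> bracket w \<gamma> y > 0"
  with assms(1) have "y1 w \<gamma> \<le> ereal y"
    unfolding y1_def by (intro Inf_lower) auto
  with assms(2) show False by simp
qed

lemma pos_sol_nonneg: "pos_sol w \<gamma> \<theta> T Z \<Longrightarrow> t \<in> {0..T} \<Longrightarrow> 0 \<le> Z t"
  unfolding pos_sol_def by (cases "t = T") (auto simp: less_imp_le)

section \<open>The weighting function and the transform \<open>h\<close>\<close>

locale probability_weighting =
  fixes w :: "real \<Rightarrow> real"
  assumes assumption1: "assumption1 w"
begin

lemma w_0: "w 0 = 0"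
  and w_1: "w 1 = 1"
  and continuous_on_w: "continuous_on {0..1} w"
  and strict_mono_on_w: "strict_mono_on {0..1} w"
  and continuous_on_deriv_w: "continuous_on {0<..<1} (deriv w)"
  using assumption1 unfolding assumption1_def by auto

lemma DERIV_w: "0 < p \<Longrightarrow> p < 1 \<Longrightarrow> (w has_real_derivative deriv w p) (at p)"
  using assumption1 unfolding assumption1_def by (auto simp: DERIV_deriv_iff_real_differentiable)

lemma deriv_w_le:
  obtains c \<alpha> where "c > 0" "-1 < \<alpha>" "\<alpha> < 0"
    "\<And>p. 0 < p \<Longrightarrow> p < 1 \<Longrightarrow> deriv w p \<le> c * (p powr \<alpha> + (1 - p) powr \<alpha>)"
proof -
  from assumption1 obtain c \<alpha> where c: "c > 0" "-1 < \<alpha>" "\<alpha> < 0"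
    and bound: "\<forall>p\<in>{0<..<1}. deriv w p \<le> c * (p powr \<alpha> + (1 - p) powr \<alpha>)"
    unfolding assumption1_def by blast
  show thesis
    using bound by (intro that[OF c]) auto
qed

lemma w_mono: "0 \<le> x \<Longrightarrow> x \<le> y \<Longrightarrow> y \<le> 1 \<Longrightarrow> w x \<le> w y"
  using strict_mono_on_leD[OF strict_mono_on_w] by simp

lemma deriv_w_nonneg:
  assumes "0 < p" "p < 1"
  shows "deriv w p \<ge> 0"
proof (rule ccontr)
  assume "\<not> deriv w p \<ge> 0"
  then obtain d where "d > 0" and d: "\<And>h. 0 < h \<Longrightarrow> h < d \<Longrightarrow> w (p + h) < w p"
    using DERIV_neg_dec_right[OF DERIV_w[OF assms]] by force
  define h where "h = min (d / 2) ((1 - p) / 2)"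
  have "0 < h" "h < d" "p + h \<le> 1"
    using \<open>d > 0\<close> assms by (auto simp: h_def min_def field_simps)
  then show False
    using d[of h] w_mono[of p "p + h"] assms by simp
qed

lemma isCont_wbar: "isCont (wbar w) x"
  unfolding wbar_def
  by (rule continuous_on_interior[of UNIV], intro continuous_intros continuous_on_compose2[OF continuous_on_w])
     auto

lemma mono_wbar: "x \<le> y \<Longrightarrow> wbar w x \<le> wbar w y"
  unfolding wbar_def by (intro diff_left_mono w_mono) auto

lemma wbar_eq_0: "x \<le> 0 \<Longrightarrow> wbar w x = 0"
  and wbar_eq_1: "1 \<le> x \<Longrightarrow> wbar w x = 1"
  unfolding wbar_def by (simp_all add: w_0 w_1)

lemma wbar_nonneg: "wbar w x \<ge> 0"
  using mono_wbar[of 0 x] wbar_eq_0[of 0] wbar_eq_0[of x] by (cases "x \<ge> 0") auto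

lemma DERIV_wbar:
  assumes "0 < p" "p < 1"
  shows "(wbar w has_real_derivative deriv w (1 - p)) (at p)"
proof -
  have "((\<lambda>x. w (1 - x)) has_real_derivative deriv w (1 - p) * (- 1)) (at p)"
    by (rule DERIV_chain2[OF DERIV_w]) (use assms in \<open>auto intro!: derivative_eq_intros\<close>)
  from DERIV_diff[OF DERIV_const[of 1] this]
  have "((\<lambda>x. 1 - w (1 - x)) has_real_derivative deriv w (1 - p)) (at p)"
    by simp
  then show ?thesis
    by (rule has_field_derivative_transform_within_open[of _ _ _ "{0<..<1}"])
       (use assms in \<open>auto simp: wbar_def\<close>)
qed

lemma isCont_deriv_w_reflect: "0 < p \<Longrightarrow> p < 1 \<Longrightarrow> isCont (\<lambda>x. deriv w (1 - x)) p"
  using continuous_on_deriv_w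
  by (intro continuous_intros isCont_o2[of p "\<lambda>x. 1 - x" "deriv w"])
     (auto simp: continuous_on_eq_continuous_at)

definition wbar_density :: "real \<Rightarrow> real" where
  "wbar_density p = indicator {0<..<1} p * deriv w (1 - p)"

lemma borel_measurable_wbar_density [measurable]: "wbar_density \<in> borel_measurable borel"
proof -
  have "continuous_on {0<..<1} (\<lambda>x. deriv w (1 - x))"
    using isCont_deriv_w_reflect by (simp add: continuous_at_imp_continuous_on)
  from borel_measurable_continuous_on_indicator[OF _ this]
  show ?thesis unfolding wbar_density_def by simp
qed

lemma wbar_density_nonneg: "wbar_density p \<ge> 0"
  unfolding wbar_density_def using deriv_w_nonneg[of "1 - p"] by (auto simp: indicator_def)

lemma interval_integral_wbar_density:
  assumes "0 < x" "x \<le> 1"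
  shows "set_integrable lborel {0<..<x} (\<lambda>p. deriv w (1 - p))"
    and "(LBINT p=0..x. deriv w (1 - p)) = wbar w x"
proof -
  have lim: "((wbar w \<circ> real_of_ereal) \<longlongrightarrow> wbar w 0) (at_right (ereal 0))"
    "((wbar w \<circ> real_of_ereal) \<longlongrightarrow> wbar w x) (at_left (ereal x))"
    unfolding ereal_tendsto_simps1 using isCont_wbar[of 0] isCont_wbar[of x]
    by (simp_all add: isCont_def filterlim_at_split)
  have "ereal 0 < ereal x"
    using assms by simp
  from interval_integral_FTC_nonneg[OF this, of "wbar w" "\<lambda>p. deriv w (1 - p)" "wbar w 0" "wbar w x"]
    lim assms DERIV_wbar isCont_deriv_w_reflect deriv_w_nonneg
  show "set_integrable lborel {0<..<x} (\<lambda>p. deriv w (1 - p))"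
    "(LBINT p=0..x. deriv w (1 - p)) = wbar w x"
    by (auto simp: wbar_eq_0 zero_ereal_def)
qed

lemma nn_integral_wbar_density_atMost:
  "(\<integral>\<^sup>+p. ennreal (wbar_density p) * indicator {..x} p \<partial>lborel) = ennreal (wbar w x)"
proof (cases "x \<le> 0")
  case True
  have "(\<integral>\<^sup>+p. ennreal (wbar_density p) * indicator {..x} p \<partial>lborel) = (\<integral>\<^sup>+(p::real). 0 \<partial>lborel)"
    by (intro nn_integral_cong) (use True in \<open>auto simp: wbar_density_def indicator_def\<close>)
  with True show ?thesis by (simp add: wbar_eq_0)
next
  case False
  define m where "m = min x 1"
  have m: "0 < m" "m \<le> 1"
    using False by (auto simp: m_def)
  have "(\<integral>\<^sup>+p. ennreal (wbar_density p) * indicator {..x} p \<partial>lborel)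
      = (\<integral>\<^sup>+p. ennreal (indicator {0<..<m} p * deriv w (1 - p)) \<partial>lborel)"
    using AE_lborel_singleton[of m]
    by (intro nn_integral_cong_AE, eventually_elim) (auto simp: wbar_density_def indicator_def m_def)
  also have "\<dots> = ennreal (LBINT p=0..m. deriv w (1 - p))"
    using interval_integral_wbar_density(1)[OF m] deriv_w_nonneg m
    by (subst nn_integral_eq_integral)
       (auto simp: set_integrable_def interval_lebesgue_integral_def set_lebesgue_integral_def
         zero_ereal_def indicator_def intro!: AE_I2)
  also have "\<dots> = ennreal (wbar w x)"
    using interval_integral_wbar_density(2)[OF m] by (simp add: m_def wbar_def min.commute)
  finally show ?thesis .
qed

lemma wbar_at_bot: "(wbar w \<longlongrightarrow> 0) at_bot"
  by (rule tendsto_eventually) (auto simp: eventually_at_bot_linorder intro!: exI[of _ 0] wbar_eq_0)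

lemma wbar_at_top: "(wbar w \<longlongrightarrow> 1) at_top"
  by (rule tendsto_eventually) (auto simp: eventually_at_top_linorder intro!: exI[of _ 1] wbar_eq_1)

lemma continuous_at_right_wbar: "continuous (at_right a) (wbar w)"
  using isCont_wbar by (simp add: continuous_at_split)

abbreviation wbar_measure :: "real measure" where
  "wbar_measure \<equiv> interval_measure (wbar w)"

lemma real_distribution_wbar_measure: "real_distribution wbar_measure"
  by (rule real_distribution_interval_measure[OF mono_wbar continuous_at_right_wbar wbar_at_bot wbar_at_top])

lemma wbar_measure_eq_density: "wbar_measure = density lborel wbar_density"
proof (rule cdf_unique[OF real_distribution_wbar_measure])
  have "(\<integral>\<^sup>+p. ennreal (wbar_density p) \<partial>lborel) = (\<integral>\<^sup>+p. ennreal (wbar_density p) * indicator {..1} p \<partial>lborel)"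
    by (intro nn_integral_cong) (auto simp: wbar_density_def indicator_def)
  then have "prob_space (density lborel wbar_density)"
    by (intro prob_spaceI) (simp add: emeasure_density nn_integral_wbar_density_atMost wbar_eq_1)
  then show "real_distribution (density lborel wbar_density)"
    by (simp add: real_distribution_def real_distribution_axioms_def)
  have "cdf (density lborel wbar_density) = wbar w"
    by (rule ext) (simp add: cdf_def measure_def emeasure_density nn_integral_wbar_density_atMost wbar_nonneg)
  then show "cdf wbar_measure = cdf (density lborel wbar_density)"
    using cdf_interval_measure[OF mono_wbar continuous_at_right_wbar wbar_at_bot] by simp
qed

text \<open>By the Chernoff bounds the Gaussian tails of \<open>Phi_inv\<close> cost only a factor
  \<open>p powr (-e) + (1 - p) powr (-e)\<close> for any \<open>e > 0\<close>; with \<open>e = (1 + \<alpha>) / 2\<close> the singularity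
  of \<open>w'\<close> allowed by Assumption 1 stays integrable.\<close>

lemma wbar_density_exp_quantile_le:
  assumes "a \<ge> 0"
  obtains K \<beta> where "\<beta> > -1" "\<And>p. 0 < p \<Longrightarrow> p < 1 \<Longrightarrow>
    wbar_density p * exp (a * \<bar>normal_quantile p\<bar>) \<le> K * (p powr \<beta> + (1 - p) powr \<beta>)"
proof -
  obtain c \<alpha> where "c > 0" "-1 < \<alpha>" "\<alpha> < 0"
    and deriv_w: "\<And>p. 0 < p \<Longrightarrow> p < 1 \<Longrightarrow> deriv w p \<le> c * (p powr \<alpha> + (1 - p) powr \<alpha>)"
    using deriv_w_le by blast
  define e where "e = (1 + \<alpha>) / 2"
  define E where "E = exp (a\<^sup>2 / (2 * e))"
  have "e > 0" "\<alpha> - e > -1"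
    using \<open>-1 < \<alpha>\<close> by (simp_all add: e_def field_simps)
  show ?thesis
  proof (rule that[of "\<alpha> - e" "c * E * 4"])
    fix p :: real
    assume p: "0 < p" "p < 1"
    have "wbar_density p \<le> c * (p powr \<alpha> + (1 - p) powr \<alpha>)"
      using deriv_w[of "1 - p"] p by (simp add: wbar_density_def add.commute)
    moreover have "exp (a * \<bar>normal_quantile p\<bar>) \<le> E * (p powr (- e) + (1 - p) powr (- e))"
      unfolding E_def using exp_abs_normal_quantile_le[OF p \<open>a \<ge> 0\<close> \<open>e > 0\<close>] .
    ultimately have "wbar_density p * exp (a * \<bar>normal_quantile p\<bar>)
        \<le> (c * (p powr \<alpha> + (1 - p) powr \<alpha>)) * (E * (p powr (- e) + (1 - p) powr (- e)))"
      using wbar_density_nonneg[of p] \<open>c > 0\<close> by (intro mult_mono) auto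
    also have "\<dots> = c * E * ((p powr \<alpha> + (1 - p) powr \<alpha>) * (p powr (- e) + (1 - p) powr (- e)))"
      by (simp add: ac_simps)
    also have "\<dots> \<le> c * E * (4 * (p powr (\<alpha> - e) + (1 - p) powr (\<alpha> - e)))"
      using p \<open>c > 0\<close> \<open>\<alpha> < 0\<close> \<open>e > 0\<close>
      by (intro mult_left_mono powr_sum_mult_powr_sum_le) (auto simp: E_def)
    finally show "wbar_density p * exp (a * \<bar>normal_quantile p\<bar>)
        \<le> c * E * 4 * (p powr (\<alpha> - e) + (1 - p) powr (\<alpha> - e))"
      by (simp add: ac_simps)
  qed fact
qed

lemma integrable_exp_abs_quantile:
  assumes "a \<ge> 0"
  shows "integrable wbar_measure (\<lambda>p. exp (a * \<bar>normal_quantile p\<bar>))"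
proof -
  obtain K \<beta> where "\<beta> > -1" and bound: "\<And>p. 0 < p \<Longrightarrow> p < 1 \<Longrightarrow>
      wbar_density p * exp (a * \<bar>normal_quantile p\<bar>) \<le> K * (p powr \<beta> + (1 - p) powr \<beta>)"
    using wbar_density_exp_quantile_le[OF assms] by blast
  have "integrable lborel (\<lambda>p. K * (indicator {0..1} p * (p powr \<beta> + (1 - p) powr \<beta>)))"
    using set_integrable_powr_endpoints[OF \<open>\<beta> > -1\<close>] unfolding set_integrable_def by simp
  then have "integrable lborel (\<lambda>p. wbar_density p * exp (a * \<bar>normal_quantile p\<bar>))"
  proof (rule Bochner_Integration.integrable_bound)
    show "AE p in lborel. norm (wbar_density p * exp (a * \<bar>normal_quantile p\<bar>))
        \<le> norm (K * (indicator {0..1} p * (p powr \<beta> + (1 - p) powr \<beta>)))"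
      using bound wbar_density_nonneg
      by (intro AE_I2) (force simp: wbar_density_def indicator_def intro: order_trans[OF _ abs_ge_self])
  qed measurable
  then show ?thesis
    unfolding wbar_measure_eq_density using wbar_density_nonneg by (subst integrable_density) auto
qed

lemma AE_wbar_measure_unit_interval: "AE p in wbar_measure. 0 < p \<and> p < 1"
proof -
  have "AE p in lborel. 0 < ennreal (wbar_density p) \<longrightarrow> 0 < p \<and> p < 1"
    by (intro AE_I2) (auto simp: wbar_density_def indicator_def)
  then show ?thesis
    unfolding wbar_measure_eq_density by (subst AE_density) auto
qed

lemma hfun_eq_integral: "hfun w x = (\<integral>p. exp (x * - normal_quantile p) \<partial>wbar_measure)"
proof -
  have "hfun w x = (\<integral>p. indicator {0<..<1} p * exp (x * - normal_quantile p) \<partial>wbar_measure)"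
    unfolding hfun_def set_lebesgue_integral_def
    by (intro Bochner_Integration.integral_cong) (auto simp: normal_quantile_def indicator_def)
  also have "\<dots> = (\<integral>p. exp (x * - normal_quantile p) \<partial>wbar_measure)"
  proof (rule integral_cong_AE)
    show "AE p in wbar_measure. indicator {0<..<1} p * exp (x * - normal_quantile p)
        = exp (x * - normal_quantile p)"
      using AE_wbar_measure_unit_interval by eventually_elim (simp add: indicator_def)
  qed simp_all
  finally show ?thesis .
qed

definition hcoeff :: "nat \<Rightarrow> real" where
  "hcoeff n = (\<integral>p. (- normal_quantile p) ^ n \<partial>wbar_measure) / fact n"

lemma hfun_sums: "(\<lambda>n. hcoeff n * x ^ n) sums hfun w x"
  using integral_exp_sums[of "\<lambda>p. - normal_quantile p" wbar_measure x]
    integrable_exp_abs_quantile[of "\<bar>x\<bar>"]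
  by (simp add: hfun_eq_integral hcoeff_def field_simps)

lemma hfun_eq_suminf: "hfun w = (\<lambda>x. \<Sum>n. hcoeff n * x ^ n)"
  using hfun_sums by (simp add: fun_eq_iff sums_iff)

lemma DERIV_hfun_suminf: "(hfun w has_real_derivative (\<Sum>n. diffs hcoeff n * x ^ n)) (at x)"
  unfolding hfun_eq_suminf
  by (rule termdiffs_strong_converges_everywhere) (use hfun_sums sums_summable in blast)

lemma deriv_hfun_eq_suminf: "deriv (hfun w) = (\<lambda>x. \<Sum>n. diffs hcoeff n * x ^ n)"
  using DERIV_hfun_suminf DERIV_imp_deriv by blast

lemma DERIV_hfun: "(hfun w has_real_derivative deriv (hfun w) x) (at x)"
  using DERIV_hfun_suminf by (simp add: deriv_hfun_eq_suminf)

lemma DERIV_deriv_hfun: "(deriv (hfun w) has_real_derivative deriv (deriv (hfun w)) x) (at x)"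
proof -
  have "(deriv (hfun w) has_real_derivative (\<Sum>n. diffs (diffs hcoeff) n * x ^ n)) (at x)"
    unfolding deriv_hfun_eq_suminf
    by (intro termdiffs_strong_converges_everywhere termdiff_converges_all)
       (use hfun_sums sums_summable in blast)
  then show ?thesis
    using DERIV_imp_deriv by metis
qed

lemma hfun_pos: "hfun w x > 0"
proof -
  interpret real_distribution wbar_measure
    by (rule real_distribution_wbar_measure)
  have "integrable wbar_measure (\<lambda>p. exp (x * - normal_quantile p))"
    by (rule Bochner_Integration.integrable_bound[OF integrable_exp_abs_quantile[of "\<bar>x\<bar>"]])
       (auto simp: abs_mult[symmetric] intro!: AE_I2)
  then have "hfun w x \<noteq> 0"
    using integral_nonneg_eq_0_iff_AE[of wbar_measure "\<lambda>p. exp (x * - normal_quantile p)"] AE_False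
    by (simp add: hfun_eq_integral)
  moreover have "hfun w x \<ge> 0"
    unfolding hfun_eq_integral by (intro integral_nonneg_AE) simp
  ultimately show ?thesis by simp
qed

lemma hfun_neq_0 [simp]: "hfun w x \<noteq> 0"
  using hfun_pos[of x] by simp

lemma isCont_hfun [continuous_intros]: "isCont g x \<Longrightarrow> isCont (\<lambda>x. hfun w (g x)) x"
  using DERIV_hfun DERIV_isCont isCont_o2 by blast

lemma isCont_deriv_hfun [continuous_intros]: "isCont g x \<Longrightarrow> isCont (\<lambda>x. deriv (hfun w) (g x)) x"
  using DERIV_deriv_hfun DERIV_isCont isCont_o2 by blast

lemma bracket_sq_lower_bound:
  assumes "deriv (hfun w) 0 \<noteq> 0"
  obtains d k where "d > 0" "k > 0" "\<And>y. 0 < y \<Longrightarrow> y < d \<Longrightarrow> k \<le> y * (bracket w \<gamma> y)\<^sup>2"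
proof -
  define P where "P y = sqrt y + deriv (hfun w) (- \<gamma> * sqrt y) / hfun w (- \<gamma> * sqrt y)" for y
  have "isCont P 0"
    unfolding P_def[abs_def] by (intro continuous_intros) auto
  moreover have "P 0 \<noteq> 0"
    using assms hfun_pos[of 0] by (simp add: P_def)
  ultimately have "((\<lambda>y. \<bar>P y\<bar>) \<longlongrightarrow> \<bar>P 0\<bar>) (at 0)" "\<bar>P 0\<bar> / 2 < \<bar>P 0\<bar>"
    by (auto intro!: tendsto_intros simp: isCont_def)
  then have "\<forall>\<^sub>F y in at 0. \<bar>P 0\<bar> / 2 < \<bar>P y\<bar>"
    by (rule order_tendstoD(1))
  then obtain d where "d > 0" and d: "\<And>y. y \<noteq> 0 \<Longrightarrow> dist y 0 < d \<Longrightarrow> \<bar>P 0\<bar> / 2 < \<bar>P y\<bar>"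
    unfolding eventually_at by auto
  show ?thesis
  proof (rule that[OF \<open>d > 0\<close>])
    show "(\<bar>P 0\<bar> / 2)\<^sup>2 > 0"
      using \<open>P 0 \<noteq> 0\<close> by simp
    fix y :: real
    assume y: "0 < y" "y < d"
    have "sqrt y * bracket w \<gamma> y = P y"
      using y hfun_pos[of "- \<gamma> * sqrt y"] by (simp add: bracket_def P_def field_simps)
    then have "y * (bracket w \<gamma> y)\<^sup>2 = (P y)\<^sup>2"
      using y by (metis power_mult_distrib real_sqrt_pow2 less_imp_le)
    moreover have "(\<bar>P 0\<bar> / 2)\<^sup>2 \<le> \<bar>P y\<bar>\<^sup>2"
      using d[of y] y by (intro power_mono) auto
    ultimately show "(\<bar>P 0\<bar> / 2)\<^sup>2 \<le> y * (bracket w \<gamma> y)\<^sup>2"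
      by simp
  qed
qed

lemma no_pos_sol_if_deriv_hfun_0_neq_0:
  assumes "deriv (hfun w) 0 \<noteq> 0" "T > 0"
  shows "\<not> pos_sol w \<gamma> \<theta> T Z"
proof
  assume "pos_sol w \<gamma> \<theta> T Z"
  then have cont: "continuous_on {0..T} Z" and "Z T = 0"
    and sol: "\<And>s. s \<in> {0..<T} \<Longrightarrow> Z s > 0 \<and> bracket w \<gamma> (Z s) \<noteq> 0 \<and>
      (Z has_real_derivative - \<theta>\<^sup>2 * (bracket w \<gamma> (Z s)) powi (-2)) (at s within {0..T})"
    unfolding pos_sol_def by auto
  obtain d k where "d > 0" "k > 0" and k: "\<And>y. 0 < y \<Longrightarrow> y < d \<Longrightarrow> k \<le> y * (bracket w \<gamma> y)\<^sup>2"
    using bracket_sq_lower_bound[OF assms(1)] by blast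
  have "\<forall>\<^sub>F t in at_left T. Z t < d"
    using order_tendstoD(2)[OF continuous_on_Icc_at_leftD[OF cont assms(2)]] \<open>Z T = 0\<close> \<open>d > 0\<close>
    by simp
  then obtain b where "b < T" and small: "\<And>t. b < t \<Longrightarrow> t < T \<Longrightarrow> Z t < d"
    by (auto simp: eventually_at_left_field)
  define t0 where "t0 = max 0 ((b + T) / 2)"
  have t0: "0 \<le> t0" "b < t0" "t0 < T"
    using \<open>b < T\<close> assms(2) by (auto simp: t0_def less_max_iff_disj field_simps)
  have "Z t0 * exp (\<theta>\<^sup>2 / k * (t0 - T)) \<le> Z T"
  proof (rule linear_differential_inequality_lower_bound)
    show "continuous_on {t0..T} Z"
      by (rule continuous_on_subset[OF cont]) (use t0 in auto)
    fix t
    assume t: "t0 < t" "t < T"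
    define c where "c = bracket w \<gamma> (Z t)"
    have "Z t > 0" "c \<noteq> 0"
      and DERIV_Z: "(Z has_real_derivative - \<theta>\<^sup>2 * c powi (-2)) (at t)"
      using sol[of t] t t0 by (auto simp: c_def at_within_Icc_at)
    have "k \<le> Z t * c\<^sup>2"
      using k[of "Z t"] \<open>Z t > 0\<close> small[of t] t t0 by (simp add: c_def)
    then have "inverse (c\<^sup>2) \<le> Z t / k"
      using \<open>c \<noteq> 0\<close> \<open>k > 0\<close> by (simp add: field_simps)
    then have "- (\<theta>\<^sup>2 / k) * Z t \<le> - \<theta>\<^sup>2 * c powi (-2)"
      using mult_left_mono[of "inverse (c\<^sup>2)" "Z t / k" "\<theta>\<^sup>2"] by (simp add: power_int_minus)
    with DERIV_Z show "\<exists>D. (Z has_real_derivative D) (at t) \<and> - (\<theta>\<^sup>2 / k) * Z t \<le> D"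
      by blast
  qed (use t0 in simp)
  moreover have "Z t0 > 0"
    using sol[of t0] t0 by simp
  ultimately show False
    using \<open>Z T = 0\<close> by (simp add: mult_le_0_iff)
qed

end

section \<open>The case \<open>h'(0) = 0\<close>\<close>

text \<open>\<open>h'(0) = - \<integral> Phi_inv d(wbar w)\<close> is minus the mean of the normal law distorted by \<open>w\<close>,
  whence the name of the locale.\<close>

locale centered_weighting = probability_weighting +
  assumes deriv_hfun_0: "deriv (hfun w) 0 = 0"
begin

definition hslope :: "real \<Rightarrow> real" where
  "hslope u = (if u = 0 then deriv (deriv (hfun w)) 0 else deriv (hfun w) u / u)"

lemma isCont_hslope [continuous_intros]: "isCont g x \<Longrightarrow> isCont (\<lambda>x. hslope (g x)) x"
proof (rule isCont_o2[of x g hslope])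
  show "isCont hslope (g x)"
    using isCont_slope_extension[OF DERIV_deriv_hfun deriv_hfun_0 DERIV_isCont[OF DERIV_deriv_hfun]]
    unfolding hslope_def[abs_def] .
qed

text \<open>For \<open>y > 0\<close> and \<open>u = -\<gamma> sqrt y\<close> the quotient \<open>h'(u) / (h(u) sqrt y)\<close> equals
  \<open>-\<gamma> (h'(u) / u) / h(u)\<close>; as \<open>h'(0) = 0\<close>, the slope \<open>h'(u) / u\<close> extends continuously to \<open>u = 0\<close>,
  which makes the following a continuous extension of the bracket to all of \<open>\<real>\<close>.\<close>

definition bracket_ext :: "real \<Rightarrow> real \<Rightarrow> real" where
  "bracket_ext \<gamma> y = 1 - \<gamma> * hslope (- \<gamma> * sqrt y) / hfun w (- \<gamma> * sqrt y)"

lemma isCont_bracket_ext: "isCont (bracket_ext \<gamma>) y"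
  unfolding bracket_ext_def[abs_def] by (intro continuous_intros) auto

lemma bracket_eq_bracket_ext:
  assumes "y > 0"
  shows "bracket w \<gamma> y = bracket_ext \<gamma> y"
proof (cases "\<gamma> = 0")
  case False
  then have "- \<gamma> * sqrt y \<noteq> 0"
    using assms by simp
  with assms show ?thesis
    by (simp add: bracket_def bracket_ext_def hslope_def field_simps)
qed (simp add: bracket_def bracket_ext_def deriv_hfun_0)

definition Gint :: "real \<Rightarrow> real \<Rightarrow> real" where
  "Gint \<gamma> y = integral {0..y} (\<lambda>z. (bracket_ext \<gamma> z)\<^sup>2)"

lemma continuous_on_bracket_ext_sq: "continuous_on S (\<lambda>z. (bracket_ext \<gamma> z)\<^sup>2)"
  by (intro continuous_at_imp_continuous_on ballI isCont_power isCont_bracket_ext)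

lemma DERIV_Gint:
  assumes "y > 0"
  shows "(Gint \<gamma> has_real_derivative (bracket w \<gamma> y)\<^sup>2) (at y)"
proof -
  have "(Gint \<gamma> has_real_derivative (bracket_ext \<gamma> y)\<^sup>2) (at y within {0..y + 1})"
    unfolding Gint_def[abs_def]
    by (rule integral_has_real_derivative[OF continuous_on_bracket_ext_sq]) (use assms in simp)
  then show ?thesis
    using assms by (simp add: at_within_Icc_at bracket_eq_bracket_ext)
qed

lemma continuous_on_Gint: "continuous_on {0..K} (Gint \<gamma>)"
  unfolding Gint_def[abs_def]
  by (rule indefinite_integral_continuous_1[OF integrable_continuous_interval[OF continuous_on_bracket_ext_sq]])

lemma Gint_0 [simp]: "Gint \<gamma> 0 = 0"
  by (simp add: Gint_def)

lemma Gint_mono: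
  assumes "0 \<le> u" "u \<le> v"
  shows "Gint \<gamma> u \<le> Gint \<gamma> v"
proof (rule DERIV_nonneg_imp_increasing_open[OF assms(2)])
  show "continuous_on {u..v} (Gint \<gamma>)"
    by (rule continuous_on_subset[OF continuous_on_Gint[of v]]) (use assms in auto)
  fix x
  assume "u < x" "x < v"
  then show "\<exists>D. (Gint \<gamma> has_real_derivative D) (at x) \<and> 0 \<le> D"
    using DERIV_Gint[of x \<gamma>] assms by (intro exI[of _ "(bracket w \<gamma> x)\<^sup>2"]) auto
qed

lemma Gint_nonneg: "0 \<le> y \<Longrightarrow> 0 \<le> Gint \<gamma> y"
  using Gint_mono[of 0 y] by simp

lemma nn_integral_bracket_ext_sq:
  assumes "0 \<le> y"
  shows "(\<integral>\<^sup>+z. ennreal ((bracket_ext \<gamma> z)\<^sup>2) * indicator {0..y} z \<partial>lborel) = ennreal (Gint \<gamma> y)"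
  unfolding Gint_def
  by (intro nn_integral_has_integral_lebesgue' integrable_integral integrable_continuous_interval
      continuous_on_bracket_ext_sq) (use assms in auto)

lemma Gfun_eq_Gint:
  assumes "0 \<le> y"
  shows "Gfun w \<gamma> (ereal y) = ennreal (Gint \<gamma> y)"
proof -
  have "Gfun w \<gamma> (ereal y) = (\<integral>\<^sup>+z. ennreal ((bracket_ext \<gamma> z)\<^sup>2) * indicator {0..y} z \<partial>lborel)"
    unfolding Gfun_def using AE_lborel_singleton[of 0]
    by (intro nn_integral_cong_AE, eventually_elim)
       (auto simp: indicator_def bracket_eq_bracket_ext)
  then show ?thesis
    using nn_integral_bracket_ext_sq[OF assms] by simp
qed

lemma Gfun_infinity: "Gfun w \<gamma> \<infinity> = (SUP n. ennreal (Gint \<gamma> (real n)))"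
proof -
  define f where "f n z = ennreal ((bracket_ext \<gamma> z)\<^sup>2) * indicator {0..real n} z" for n z
  have [measurable]: "(\<lambda>z. (bracket_ext \<gamma> z)\<^sup>2) \<in> borel_measurable borel"
    by (rule borel_measurable_continuous_onI[OF continuous_on_bracket_ext_sq])
  have [measurable]: "f n \<in> borel_measurable borel" for n
    unfolding f_def by measurable
  have "Gfun w \<gamma> \<infinity> = (\<integral>\<^sup>+z. (SUP n. f n z) \<partial>lborel)"
    unfolding Gfun_def using AE_lborel_singleton[of 0]
  proof (intro nn_integral_cong_AE, eventually_elim)
    fix z :: real
    assume "z \<noteq> 0"
    have "(SUP n. f n z) = ennreal ((bracket_ext \<gamma> z)\<^sup>2) * indicator {0..} z"
    proof (rule antisym)
      show "(SUP n. f n z) \<le> ennreal ((bracket_ext \<gamma> z)\<^sup>2) * indicator {0..} z"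
        by (intro SUP_least) (auto simp: f_def indicator_def)
      obtain n where "z \<le> real n"
        using real_arch_simple by blast
      then show "ennreal ((bracket_ext \<gamma> z)\<^sup>2) * indicator {0..} z \<le> (SUP n. f n z)"
        by (intro SUP_upper2[of n]) (auto simp: f_def indicator_def)
    qed
    with \<open>z \<noteq> 0\<close> show "indicator {z. 0 \<le> z \<and> ereal z \<le> \<infinity>} z * ennreal ((bracket w \<gamma> z)\<^sup>2)
        = (SUP n. f n z)"
      by (auto simp: indicator_def bracket_eq_bracket_ext)
  qed
  also have "\<dots> = (SUP n. \<integral>\<^sup>+z. f n z \<partial>lborel)"
    by (intro nn_integral_monotone_convergence_SUP)
       (auto simp: incseq_def le_fun_def f_def indicator_def intro!: mult_left_mono)
  also have "\<dots> = (SUP n. ennreal (Gint \<gamma> (real n)))"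
    by (simp add: f_def nn_integral_bracket_ext_sq)
  finally show ?thesis .
qed

lemma Gint_strict_mono_below_y1:
  assumes "0 \<le> u" "u < v" "ereal v \<le> y1 w \<gamma>"
  shows "Gint \<gamma> u < Gint \<gamma> v"
proof (rule DERIV_pos_imp_increasing_open[OF assms(2)])
  show "continuous_on {u..v} (Gint \<gamma>)"
    by (rule continuous_on_subset[OF continuous_on_Gint[of v]]) (use assms in auto)
  fix x
  assume x: "u < x" "x < v"
  with assms have "bracket w \<gamma> x > 0"
    by (intro bracket_pos_below_y1) (auto intro: less_le_trans[of _ "ereal v"])
  then show "\<exists>D. (Gint \<gamma> has_real_derivative D) (at x) \<and> 0 < D"
    using DERIV_Gint[of x \<gamma>] x assms by (intro exI[of _ "(bracket w \<gamma> x)\<^sup>2"]) auto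
qed

lemma Ginv_Gint:
  assumes "0 \<le> y" "ereal y \<le> y1 w \<gamma>"
  shows "Ginv w \<gamma> (Gint \<gamma> y) = y"
  unfolding Ginv_def
proof (rule the_equality)
  show "0 \<le> y \<and> ereal y \<le> y1 w \<gamma> \<and> Gfun w \<gamma> (ereal y) = ennreal (Gint \<gamma> y)"
    using assms by (simp add: Gfun_eq_Gint)
  fix y'
  assume y': "0 \<le> y' \<and> ereal y' \<le> y1 w \<gamma> \<and> Gfun w \<gamma> (ereal y') = ennreal (Gint \<gamma> y)"
  then have "Gint \<gamma> y' = Gint \<gamma> y"
    using Gint_nonneg[of y' \<gamma>] Gint_nonneg[of y \<gamma>] assms by (auto simp: Gfun_eq_Gint)
  then show "y' = y"
    using Gint_strict_mono_below_y1[of y y' \<gamma>] Gint_strict_mono_below_y1[of y' y \<gamma>] y' assms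
    by (cases y y' rule: linorder_cases) auto
qed

context
  fixes \<gamma> Ys :: real
  assumes Ys: "0 \<le> Ys" "ereal Ys \<le> y1 w \<gamma>"
begin

lemma Gint_Ginv:
  assumes "0 \<le> x" "x \<le> Gint \<gamma> Ys"
  shows "Gint \<gamma> (Ginv w \<gamma> x) = x" "0 \<le> Ginv w \<gamma> x" "Ginv w \<gamma> x \<le> Ys"
proof -
  obtain y where y: "0 \<le> y" "y \<le> Ys" "Gint \<gamma> y = x"
    using IVT'[of "Gint \<gamma>" 0 x Ys] assms Ys continuous_on_Gint[of Ys] by auto
  moreover have "Ginv w \<gamma> x = y"
    using Ginv_Gint[of y \<gamma>] y Ys(2) by (simp add: order.trans[of _ "ereal Ys"])
  ultimately show "Gint \<gamma> (Ginv w \<gamma> x) = x" "0 \<le> Ginv w \<gamma> x" "Ginv w \<gamma> x \<le> Ys"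
    by simp_all
qed

lemma Ginv_strict_bounds:
  assumes "0 < x" "x < Gint \<gamma> Ys"
  shows "0 < Ginv w \<gamma> x" "Ginv w \<gamma> x < Ys" "bracket w \<gamma> (Ginv w \<gamma> x) > 0"
proof -
  note Ginv = Gint_Ginv[of x]
  show pos: "0 < Ginv w \<gamma> x"
    using Ginv assms by (cases "Ginv w \<gamma> x = 0") auto
  show less: "Ginv w \<gamma> x < Ys"
    using Ginv assms by (cases "Ginv w \<gamma> x = Ys") auto
  show "bracket w \<gamma> (Ginv w \<gamma> x) > 0"
    using less Ys by (intro bracket_pos_below_y1[OF pos]) (auto intro: less_le_trans[of _ "ereal Ys"])
qed

lemma continuous_on_Ginv: "continuous_on {0..Gint \<gamma> Ys} (Ginv w \<gamma>)"
proof -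
  have "continuous_on (Gint \<gamma> ` {0..Ys}) (Ginv w \<gamma>)"
  proof (rule continuous_on_inv[OF continuous_on_Gint compact_Icc], intro ballI)
    fix y
    assume "y \<in> {0..Ys}"
    with Ys show "Ginv w \<gamma> (Gint \<gamma> y) = y"
      by (intro Ginv_Gint) (auto intro: order.trans[of _ "ereal Ys"])
  qed
  moreover have "{0..Gint \<gamma> Ys} \<subseteq> Gint \<gamma> ` {0..Ys}"
  proof
    fix x
    assume "x \<in> {0..Gint \<gamma> Ys}"
    with Gint_Ginv[of x] show "x \<in> Gint \<gamma> ` {0..Ys}"
      by (auto intro: image_eqI[of _ _ "Ginv w \<gamma> x"])
  qed
  ultimately show ?thesis
    by (rule continuous_on_subset)
qed

lemma DERIV_Ginv:
  assumes "0 < x" "x < Gint \<gamma> Ys"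
  shows "(Ginv w \<gamma> has_real_derivative inverse ((bracket w \<gamma> (Ginv w \<gamma> x))\<^sup>2)) (at x)"
proof (rule DERIV_inverse_function[where f = "Gint \<gamma>" and a = 0 and b = "Gint \<gamma> Ys"])
  show "(Gint \<gamma> has_real_derivative (bracket w \<gamma> (Ginv w \<gamma> x))\<^sup>2) (at (Ginv w \<gamma> x))"
    using DERIV_Gint Ginv_strict_bounds[OF assms] by blast
  show "(bracket w \<gamma> (Ginv w \<gamma> x))\<^sup>2 \<noteq> 0"
    using Ginv_strict_bounds[OF assms] by simp
  show "isCont (Ginv w \<gamma>) x"
    using continuous_on_interior[OF continuous_on_Ginv, of x] assms by simp
qed (use assms Gint_Ginv in auto)

end

lemma Gint_exceeds_below_y1:
  assumes "ennreal c < Gfun w \<gamma> (y1 w \<gamma>)" "0 \<le> c"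
  obtains Ys where "0 < Ys" "ereal Ys \<le> y1 w \<gamma>" "c < Gint \<gamma> Ys"
proof (cases "y1 w \<gamma>")
  case (real r)
  then have "0 \<le> r"
    using y1_nonneg[of w \<gamma>] by simp
  with assms real have "c < Gint \<gamma> r"
    by (simp add: Gfun_eq_Gint ennreal_less_iff)
  with assms(2) \<open>0 \<le> r\<close> real show ?thesis
    by (intro that[of r]) (auto simp: order.order_iff_strict)
next
  case PInf
  with assms(1) obtain n where "ennreal c < ennreal (Gint \<gamma> (real n))"
    by (auto simp: Gfun_infinity less_SUP_iff)
  with assms(2) have "c < Gint \<gamma> (real n)"
    by (simp add: ennreal_less_iff)
  moreover from this assms(2) have "n \<noteq> 0"
    by (cases "n = 0") auto
  ultimately show ?thesis
    using PInf by (intro that[of "real n"]) auto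
next
  case MInf
  with y1_nonneg[of w \<gamma>] show ?thesis by simp
qed

lemma ereal_le_y1_if_Gint_less:
  assumes "0 \<le> y" "ennreal (Gint \<gamma> y) < Gfun w \<gamma> (y1 w \<gamma>)"
  shows "ereal y \<le> y1 w \<gamma>"
proof (rule ccontr)
  assume "\<not> ereal y \<le> y1 w \<gamma>"
  then obtain r where r: "y1 w \<gamma> = ereal r" "r < y"
    using y1_nonneg[of w \<gamma>] by (cases "y1 w \<gamma>") auto
  then have "0 \<le> r"
    using y1_nonneg[of w \<gamma>] by simp
  with r have "Gfun w \<gamma> (y1 w \<gamma>) \<le> ennreal (Gint \<gamma> y)"
    by (simp add: Gfun_eq_Gint Gint_mono ennreal_leI)
  with assms(2) show False by simp
qed

lemma pos_sol_Gint:
  assumes "T > 0" "pos_sol w \<gamma> \<theta> T Z" "t \<in> {0..T}"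
  shows "Gint \<gamma> (Z t) = \<theta>\<^sup>2 * (T - t)"
proof -
  have cont: "continuous_on {0..T} Z" and "Z T = 0"
    and sol: "\<And>s. s \<in> {0..<T} \<Longrightarrow> Z s > 0 \<and> bracket w \<gamma> (Z s) \<noteq> 0 \<and>
      (Z has_real_derivative - \<theta>\<^sup>2 * (bracket w \<gamma> (Z s)) powi (-2)) (at s within {0..T})"
    using assms(2) unfolding pos_sol_def by auto
  obtain K where K: "\<And>s. s \<in> {0..T} \<Longrightarrow> Z s \<le> K"
    using compact_attains_sup[OF compact_continuous_image[OF cont compact_Icc]] assms(1) by fastforce
  define \<phi> where "\<phi> s = Gint \<gamma> (Z s) + \<theta>\<^sup>2 * s" for s
  have "continuous_on {0..T} (\<lambda>s. Gint \<gamma> (Z s))"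
    by (rule continuous_on_compose2[OF continuous_on_Gint[of K] cont])
       (use K pos_sol_nonneg[OF assms(2)] in auto)
  then have cont_\<phi>: "continuous_on {0..T} \<phi>"
    unfolding \<phi>_def by (intro continuous_intros)
  have DERIV_\<phi>: "(\<phi> has_real_derivative 0) (at s)" if "0 < s" "s < T" for s
  proof -
    have "Z s > 0" "bracket w \<gamma> (Z s) \<noteq> 0"
      and DERIV_Z: "(Z has_real_derivative - \<theta>\<^sup>2 * (bracket w \<gamma> (Z s)) powi (-2)) (at s)"
      using sol[of s] that by (auto simp: at_within_Icc_at)
    have "((\<lambda>s. Gint \<gamma> (Z s)) has_real_derivative
        (bracket w \<gamma> (Z s))\<^sup>2 * (- \<theta>\<^sup>2 * (bracket w \<gamma> (Z s)) powi (-2))) (at s)"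
      by (rule DERIV_chain2[OF DERIV_Gint[OF \<open>Z s > 0\<close>] DERIV_Z])
    moreover have "((\<lambda>s. \<theta>\<^sup>2 * s) has_real_derivative \<theta>\<^sup>2) (at s)"
      by (auto intro!: derivative_eq_intros)
    ultimately have "(\<phi> has_real_derivative
        (bracket w \<gamma> (Z s))\<^sup>2 * (- \<theta>\<^sup>2 * (bracket w \<gamma> (Z s)) powi (-2)) + \<theta>\<^sup>2) (at s)"
      unfolding \<phi>_def by (rule DERIV_add)
    then show ?thesis
      using \<open>bracket w \<gamma> (Z s) \<noteq> 0\<close> by (simp add: power_int_minus field_simps)
  qed
  have "\<phi> t = \<phi> 0" "\<phi> T = \<phi> 0"
    using assms(1,3) by (auto intro!: DERIV_isconst2[OF _ cont_\<phi> DERIV_\<phi>])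
  with \<open>Z T = 0\<close> show ?thesis
    by (simp add: \<phi>_def algebra_simps)
qed

lemma pos_sol_eq_Ginv:
  assumes "T > 0" "ennreal (\<theta>\<^sup>2 * T) < Gfun w \<gamma> (y1 w \<gamma>)" "pos_sol w \<gamma> \<theta> T Z" "t \<in> {0..T}"
  shows "Z t = Ginv w \<gamma> (\<theta>\<^sup>2 * (T - t))"
proof -
  have G: "Gint \<gamma> (Z t) = \<theta>\<^sup>2 * (T - t)" and "0 \<le> Z t"
    using pos_sol_Gint[OF assms(1,3,4)] pos_sol_nonneg[OF assms(3,4)] .
  have "ennreal (\<theta>\<^sup>2 * (T - t)) \<le> ennreal (\<theta>\<^sup>2 * T)"
    using assms(4) by (auto intro!: ennreal_leI mult_left_mono)
  with assms(2) have "ereal (Z t) \<le> y1 w \<gamma>"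
    by (intro ereal_le_y1_if_Gint_less[OF \<open>0 \<le> Z t\<close>]) (simp add: G)
  with G \<open>0 \<le> Z t\<close> show ?thesis
    using Ginv_Gint by metis
qed

lemma pos_sol_Ginv:
  assumes "T > 0" "\<theta> \<noteq> 0" "ennreal (\<theta>\<^sup>2 * T) < Gfun w \<gamma> (y1 w \<gamma>)"
  shows "pos_sol w \<gamma> \<theta> T (\<lambda>t. Ginv w \<gamma> (\<theta>\<^sup>2 * (T - t)))"
    and "\<And>t. t \<in> {0..<T} \<Longrightarrow> bracket w \<gamma> (Ginv w \<gamma> (\<theta>\<^sup>2 * (T - t))) > 0"
proof -
  obtain Ys where "0 < Ys" and Ys: "ereal Ys \<le> y1 w \<gamma>" "\<theta>\<^sup>2 * T < Gint \<gamma> Ys"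
    by (rule Gint_exceeds_below_y1[OF assms(3)]) (use assms(1) in auto)
  then have "0 \<le> Ys" by simp
  define Y where "Y t = Ginv w \<gamma> (\<theta>\<^sup>2 * (T - t))" for t
  have level: "0 \<le> \<theta>\<^sup>2 * (T - t)" "\<theta>\<^sup>2 * (T - t) < Gint \<gamma> Ys" if "t \<in> {0..T}" for t
    using that Ys(2) mult_left_mono[of "T - t" T "\<theta>\<^sup>2"] by auto
  have level_pos: "0 < \<theta>\<^sup>2 * (T - t)" if "t \<in> {0..<T}" for t
    using that assms(2) by simp
  show bracket_pos: "bracket w \<gamma> (Y t) > 0" if "t \<in> {0..<T}" for t
    unfolding Y_def using level[of t] level_pos[OF that] that
    by (intro Ginv_strict_bounds(3)[OF \<open>0 \<le> Ys\<close> Ys(1)]) auto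
  have "continuous_on {0..T} Y"
    unfolding Y_def using level
    by (intro continuous_on_compose2[OF continuous_on_Ginv[OF \<open>0 \<le> Ys\<close> Ys(1)]] continuous_intros)
      (auto simp: less_imp_le)
  moreover have "Y T = 0"
    using Ginv_Gint[of 0 \<gamma>] y1_nonneg[of w \<gamma>] by (simp add: Y_def zero_ereal_def)
  moreover have "(Y has_real_derivative - \<theta>\<^sup>2 * (bracket w \<gamma> (Y t)) powi (-2)) (at t)"
    if "t \<in> {0..<T}" for t
  proof -
    have "((\<lambda>t. \<theta>\<^sup>2 * (T - t)) has_real_derivative - \<theta>\<^sup>2) (at t)"
      by (auto intro!: derivative_eq_intros)
    from DERIV_chain2[OF DERIV_Ginv[OF \<open>0 \<le> Ys\<close> Ys(1) level_pos[OF that] level(2)] this]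
    show ?thesis
      using that by (simp add: Y_def[abs_def] power_int_minus ac_simps)
  qed
  moreover have "Y t > 0" if "t \<in> {0..<T}" for t
    unfolding Y_def using level[of t] level_pos[OF that] that
    by (intro Ginv_strict_bounds(1)[OF \<open>0 \<le> Ys\<close> Ys(1)]) auto
  ultimately show "pos_sol w \<gamma> \<theta> T Y"
    unfolding pos_sol_def by (auto intro: has_field_derivative_at_within dest: bracket_pos)
qed

end

lemma inner_matrix_inv_pos:
  fixes A :: "real^'n^'n" and \<mu> :: "real^'n"
  assumes pd: "pos_def_mat A" and "\<mu> \<noteq> 0"
  shows "\<mu> \<bullet> (matrix_inv A *v \<mu>) > 0"
proof -
  have "x = 0" if "A *v x = 0" for x
    using pd that unfolding pos_def_mat_def by (metis inner_zero_right less_irrefl)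
  then obtain B where "B ** A = mat 1"
    using matrix_left_invertible_ker[of A] by blast
  then have "invertible A"
    unfolding invertible_left_inverse by blast
  then have "A ** matrix_inv A = mat 1"
    unfolding invertible_def matrix_inv_def by (rule someI_ex[THEN conjunct1])
  then have A_y: "A *v (matrix_inv A *v \<mu>) = \<mu>"
    by (simp add: matrix_vector_mul_assoc)
  then have "matrix_inv A *v \<mu> \<noteq> 0"
    using \<open>\<mu> \<noteq> 0\<close> by auto
  then have "(matrix_inv A *v \<mu>) \<bullet> (A *v (matrix_inv A *v \<mu>)) > 0"
    using pd unfolding pos_def_mat_def by blast
  then show ?thesis
    by (simp add: A_y inner_commute)
qed

theorem propositionB1:
  fixes w :: "real \<Rightarrow> real" and \<gamma> T :: real
    and \<mu> :: "real^'n" and \<sigma> :: "real^'d^'n"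
  assumes "assumption1 w"
    and "pos_def_mat (\<sigma> ** transpose \<sigma>)"
    and "T > 0"
  shows "((\<exists>Y. pos_sol w \<gamma> (theta \<mu> \<sigma>) T Y) \<longrightarrow> \<mu> \<noteq> 0 \<and> deriv (hfun w) 0 = 0)
    \<and> (\<mu> \<noteq> 0 \<and> deriv (hfun w) 0 = 0 \<and> Gfun w \<gamma> (y1 w \<gamma>) > ennreal ((theta \<mu> \<sigma>)\<^sup>2 * T) \<longrightarrow>
         pos_sol w \<gamma> (theta \<mu> \<sigma>) T (\<lambda>t. Ginv w \<gamma> ((theta \<mu> \<sigma>)\<^sup>2 * (T - t)))
       \<and> (\<forall>Z. pos_sol w \<gamma> (theta \<mu> \<sigma>) T Z \<longrightarrow>
            (\<forall>t\<in>{0..T}. Z t = Ginv w \<gamma> ((theta \<mu> \<sigma>)\<^sup>2 * (T - t))))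
       \<and> (\<forall>t\<in>{0..<T}. bracket w \<gamma> (Ginv w \<gamma> ((theta \<mu> \<sigma>)\<^sup>2 * (T - t))) > 0))"
proof (intro conjI impI allI ballI; (elim conjE exE)?)
  interpret probability_weighting w
    by unfold_locales (rule assms(1))
  fix Y
  assume Y: "pos_sol w \<gamma> (theta \<mu> \<sigma>) T Y"
  then show "\<mu> \<noteq> 0"
    using no_pos_sol_theta_0[OF assms(3)] by (auto simp: theta_def)
  show "deriv (hfun w) 0 = 0"
    using no_pos_sol_if_deriv_hfun_0_neq_0[OF _ assms(3)] Y by blast
next
  assume "\<mu> \<noteq> 0" "deriv (hfun w) 0 = 0" and G: "ennreal ((theta \<mu> \<sigma>)\<^sup>2 * T) < Gfun w \<gamma> (y1 w \<gamma>)"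
  interpret centered_weighting w
    by unfold_locales (rule assms(1), rule \<open>deriv (hfun w) 0 = 0\<close>)
  have "theta \<mu> \<sigma> \<noteq> 0"
    using inner_matrix_inv_pos[OF assms(2) \<open>\<mu> \<noteq> 0\<close>] by (simp add: theta_def)
  note existence = pos_sol_Ginv[OF assms(3) this G]
  show "pos_sol w \<gamma> (theta \<mu> \<sigma>) T (\<lambda>t. Ginv w \<gamma> ((theta \<mu> \<sigma>)\<^sup>2 * (T - t)))"
    by (rule existence(1))
  show "bracket w \<gamma> (Ginv w \<gamma> ((theta \<mu> \<sigma>)\<^sup>2 * (T - t))) > 0" if "t \<in> {0..<T}" for t
    using existence(2) that .
  show "Z t = Ginv w \<gamma> ((theta \<mu> \<sigma>)\<^sup>2 * (T - t))" if "pos_sol w \<gamma> (theta \<mu> \<sigma>) T Z" "t \<in> {0..T}" for Z t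
    by (rule pos_sol_eq_Ginv[OF assms(3) G that])
qed

end
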